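(* Let $\Phi$ be an $e$-dimensional formal group law over $k$, $m\in\mathbb N_{>0}\cup\{\infty\}$, and let $K\subseteq L$ be an extension of $\Phi[m]$-fields. If $K$ is strict, i.e. $C_K=K^p$, then the field extension $K\subseteq L$ is separable.
   Context: $k$ is a field of characteristic $p>0$. For a $k$-algebra $R$, $R[\bar v]:=R[X_1,\dots,X_e]/(X_1^{p^m},\dots,X_e^{p^m})$ ($R[[\bar X]]$ if $m=\infty$); $\bar w$ is a second $e$-tuple of $m$-truncated variables. $\Phi[m]\in(k[\bar v,\bar w])^e$ is the image of $\Phi(\bar X,\bar Y)$ under $X_i\mapsto v_i,Y_i\mapsto w_i$. An $m$-truncated $e$-dimensional HS-derivation on $R$ over $k$ is a family $(D_{\mathbf i}:R\to R)_{\mathbf i\in\{0,\dots,p^m-1\}^e}$ with $r\mapsto\sum D_{\mathbf i}(r)\bar v^{\mathbf i}$ a $k$-algebra homomorphism $R\to R[\bar v]$ and $D_{\mathbf 0}=\mathrm{id}$; it is an $F$-derivation if $\sum_{\mathbf i,\mathbf j}D_{\mathbf j}(D_{\mathbf i}(r))\bar v^{\mathbf i}\bar w^{\mathbf j}=\sum_{\mathbf i}D_{\mathbf i}(r)F(\bar v,\bar w)^{\mathbf i}$ for all $r$. An $F$-field is a field containing $k$ with an $F$-derivation; an extension of $F$-fields $K\subseteq L$ means $D^L_{\mathbf i}|_K=D^K_{\mathbf i}$ for all $\mathbf i$. $C_K:=\bigcap_{l=1}^e\ker D_{\varepsilon_l}$ ($\varepsilon_l$ the $l$-th unit vector). *)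

theory Defs
  imports Main "HOL-Library.Extended_Nat" "HOL-Library.Groups_Big_Fun"
begin

definition is_subfield :: "'a::field set \<Rightarrow> bool" where
  "is_subfield S \<longleftrightarrow> 0 \<in> S \<and> 1 \<in> S \<and>
     (\<forall>x\<in>S. \<forall>y\<in>S. x + y \<in> S \<and> x - y \<in> S \<and> x * y \<in> S) \<and>
     (\<forall>x\<in>S. x \<noteq> 0 \<longrightarrow> inverse x \<in> S)"

text \<open>A formal power series in the variables indexed by natural numbers is given by
  its coefficient function on exponent vectors (nat => nat); only finitely supported
  exponent vectors are meaningful.  A series "in n variables" vanishes on exponent
  vectors involving a variable with index >= n.\<close>

type_synonym 'a mps = "(nat \<Rightarrow> nat) \<Rightarrow> 'a"

definition mons :: "nat \<Rightarrow> (nat \<Rightarrow> nat) set" where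
  "mons n = {\<alpha>. \<forall>i\<ge>n. \<alpha> i = 0}"

definition mps_zero :: "'a::comm_ring_1 mps" where
  "mps_zero = (\<lambda>_. 0)"

definition mps_one :: "'a::comm_ring_1 mps" where
  "mps_one = (\<lambda>\<alpha>. if \<alpha> = (\<lambda>_. 0) then 1 else 0)"

definition mps_var :: "nat \<Rightarrow> 'a::comm_ring_1 mps" where
  "mps_var j = (\<lambda>\<alpha>. if \<alpha> = (\<lambda>i. if i = j then 1 else 0) then 1 else 0)"

definition mps_mult :: "'a::comm_ring_1 mps \<Rightarrow> 'a mps \<Rightarrow> 'a mps" where
  "mps_mult f g = (\<lambda>\<alpha>. \<Sum>\<beta>\<in>{\<beta>. \<beta> \<le> \<alpha>}. f \<beta> * g (\<lambda>i. \<alpha> i - \<beta> i))"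

primrec mps_pow :: "'a::comm_ring_1 mps \<Rightarrow> nat \<Rightarrow> 'a mps" where
  "mps_pow f 0 = mps_one"
| "mps_pow f (Suc n) = mps_mult (mps_pow f n) f"

primrec mps_monom_subst :: "nat \<Rightarrow> (nat \<Rightarrow> 'a::comm_ring_1 mps) \<Rightarrow> (nat \<Rightarrow> nat) \<Rightarrow> 'a mps" where
  "mps_monom_subst 0 g \<nu> = mps_one"
| "mps_monom_subst (Suc n) g \<nu> = mps_mult (mps_monom_subst n g \<nu>) (mps_pow (g n) (\<nu> n))"

text \<open>Substitution f(g_0,...,g_{n-1}) of series g_i (without constant term) into a
  series f in n variables; the sum is finitely supported in that situation.\<close>
definition mps_subst :: "nat \<Rightarrow> 'a::comm_ring_1 mps \<Rightarrow> (nat \<Rightarrow> 'a mps) \<Rightarrow> 'a mps" where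
  "mps_subst n f g = (\<lambda>\<alpha>. Sum_any (\<lambda>\<nu>. if \<nu> \<in> mons n then f \<nu> * mps_monom_subst n g \<nu> \<alpha> else 0))"

text \<open>An e-dimensional formal group law over k: components Phi 0, ..., Phi (e-1), each a
  power series with coefficients in k in the 2e variables X_i = var i, Y_i = var (e+i)
  (i < e), with Phi(X,0) = X, Phi(0,Y) = Y and Phi(Phi(X,Y),Z) = Phi(X,Phi(Y,Z))
  (where Z_i = var (2e+i)).\<close>

definition formal_group_law :: "'a::field set \<Rightarrow> nat \<Rightarrow> (nat \<Rightarrow> 'a mps) \<Rightarrow> bool" where
  "formal_group_law k e \<Phi> \<longleftrightarrow>
     (\<forall>l<e. \<forall>\<alpha>. \<Phi> l \<alpha> \<in> k) \<and>
     (\<forall>l<e. \<forall>\<alpha>. \<alpha> \<notin> mons (2*e) \<longrightarrow> \<Phi> l \<alpha> = 0) \<and>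
     (\<forall>l<e. mps_subst (2*e) (\<Phi> l) (\<lambda>i. if i < e then mps_var i else mps_zero) = mps_var l) \<and>
     (\<forall>l<e. mps_subst (2*e) (\<Phi> l) (\<lambda>i. if i < e then mps_zero else mps_var i) = mps_var (e + l)) \<and>
     (\<forall>l<e. mps_subst (2*e) (\<Phi> l) (\<lambda>i. if i < e then \<Phi> i else mps_var (e + i)) =
            mps_subst (2*e) (\<Phi> l) (\<lambda>i. if i < e then mps_var i
                                         else mps_subst (2*e) (\<Phi> (i - e)) (\<lambda>t. mps_var (e + t))))"

text \<open>Multi-indices i in {0,...,p^m - 1}^e (in N^e if m = infinity), represented as
  functions nat => nat vanishing outside {..<e}.\<close>
definition trunc_idx :: "nat \<Rightarrow> nat \<Rightarrow> enat \<Rightarrow> (nat \<Rightarrow> nat) set" where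
  "trunc_idx e p m = {i. (\<forall>l\<ge>e. i l = 0) \<and>
      (\<forall>l<e. (case m of \<infinity> \<Rightarrow> True | enat n \<Rightarrow> i l < p ^ n))}"

text \<open>r |-> sum D_i(r) v^i is a k-algebra homomorphism R -> R[v] and D_0 = id.
  Unfolded coefficientwise (the product in R[v] of the truncated ring).\<close>
definition HS_derivation ::
  "'a::field set \<Rightarrow> 'a set \<Rightarrow> nat \<Rightarrow> nat \<Rightarrow> enat \<Rightarrow> ((nat \<Rightarrow> nat) \<Rightarrow> 'a \<Rightarrow> 'a) \<Rightarrow> bool" where
  "HS_derivation k R e p m D \<longleftrightarrow>
     (\<forall>i\<in>trunc_idx e p m. \<forall>r\<in>R. D i r \<in> R) \<and>
     (\<forall>r\<in>R. D (\<lambda>_. 0) r = r) \<and>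
     (\<forall>i\<in>trunc_idx e p m. D i 1 = (if i = (\<lambda>_. 0) then 1 else 0)) \<and>
     (\<forall>i\<in>trunc_idx e p m. \<forall>r\<in>R. \<forall>s\<in>R. D i (r + s) = D i r + D i s) \<and>
     (\<forall>i\<in>trunc_idx e p m. \<forall>c\<in>k. \<forall>r\<in>R. D i (c * r) = c * D i r) \<and>
     (\<forall>i\<in>trunc_idx e p m. \<forall>r\<in>R. \<forall>s\<in>R.
        D i (r * s) = (\<Sum>j\<in>{j. j \<le> i}. D j r * D (\<lambda>l. i l - j l) s))"

text \<open>Coefficient of v^a w^b in F(v,w)^i = prod_l F_l(v,w)^(i_l), for a, b in the
  truncation range; it coincides with the coefficient of X^a Y^b in the power series
  Phi(X,Y)^i.\<close>
definition fgl_pow_coeff :: "nat \<Rightarrow> (nat \<Rightarrow> 'a::field mps) \<Rightarrow> (nat \<Rightarrow> nat) \<Rightarrow> (nat \<Rightarrow> nat) \<Rightarrow> (nat \<Rightarrow> nat) \<Rightarrow> 'a" where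
  "fgl_pow_coeff e \<Phi> i a b = mps_monom_subst e \<Phi> i (\<lambda>t. if t < e then a t else b (t - e))"

text \<open>Phi[m]-derivation: sum_{i,j} D_j(D_i r) v^i w^j = sum_i D_i(r) Phi[m](v,w)^i,
  compared coefficientwise at v^a w^b.\<close>
definition F_derivation ::
  "'a::field set \<Rightarrow> 'a set \<Rightarrow> nat \<Rightarrow> nat \<Rightarrow> enat \<Rightarrow> (nat \<Rightarrow> 'a mps) \<Rightarrow> ((nat \<Rightarrow> nat) \<Rightarrow> 'a \<Rightarrow> 'a) \<Rightarrow> bool" where
  "F_derivation k R e p m \<Phi> D \<longleftrightarrow> HS_derivation k R e p m D \<and>
     (\<forall>r\<in>R. \<forall>a\<in>trunc_idx e p m. \<forall>b\<in>trunc_idx e p m.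
        D b (D a r) = Sum_any (\<lambda>i. if i \<in> trunc_idx e p m then D i r * fgl_pow_coeff e \<Phi> i a b else 0))"

definition unit_idx :: "nat \<Rightarrow> nat \<Rightarrow> nat" where
  "unit_idx l = (\<lambda>t. if t = l then 1 else 0)"

definition const_field :: "'a::field set \<Rightarrow> nat \<Rightarrow> ((nat \<Rightarrow> nat) \<Rightarrow> 'a \<Rightarrow> 'a) \<Rightarrow> 'a set" where
  "const_field K e D = {x\<in>K. \<forall>l<e. D (unit_idx l) x = 0}"

definition pth_powers :: "nat \<Rightarrow> 'a::field set \<Rightarrow> 'a set" where
  "pth_powers p K = {x ^ p | x. x \<in> K}"

definition lin_indep_over :: "'a::field set \<Rightarrow> nat \<Rightarrow> (nat \<Rightarrow> 'a) \<Rightarrow> bool" where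
  "lin_indep_over K n x \<longleftrightarrow>
     (\<forall>c. (\<forall>i<n. c i \<in> K) \<and> (\<Sum>i<n. c i * x i) = 0 \<longrightarrow> (\<forall>i<n. c i = 0))"

text \<open>The extension K \<subseteq> L (L the ambient field) is separable, i.e. L and K^(1/p)
  are linearly disjoint over K; transported by Frobenius: any K-linearly independent
  x_1..x_n in L have K-linearly independent p-th powers.\<close>
definition separable_ext :: "nat \<Rightarrow> 'a::field set \<Rightarrow> 'a set \<Rightarrow> bool" where
  "separable_ext p K L \<longleftrightarrow>
     (\<forall>n x. (\<forall>i<n. x i \<in> L) \<and> lin_indep_over K n x \<longrightarrow> lin_indep_over K n (\<lambda>i. x i ^ p))"

end

theory Submission
  imports Defs "HOL-Computational_Algebra.Primes"
begin

text \<open>Each D_{\<epsilon>_l} of L is a derivation that maps K into K.  Take a K-linear relation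
  \<Sum> c_i x_i^p = 0 of minimal support among the p-th powers of K-independent x_i, normalised
  to c_j = 1.  A derivation kills p-th powers, so applying D_{\<epsilon>_l} gives the shorter
  relation \<Sum> D_{\<epsilon>_l}(c_i) x_i^p = 0, which must be trivial.  Hence every c_i is a
  constant of K, that is c_i = d_i^p by strictness, and then (\<Sum> d_i x_i)^p = 0 contradicts
  the independence of the x_i.\<close>

definition derivation :: "('a::comm_ring_1 \<Rightarrow> 'a) \<Rightarrow> bool" where
  "derivation \<delta> \<longleftrightarrow> (\<forall>x y. \<delta> (x + y) = \<delta> x + \<delta> y \<and> \<delta> (x * y) = x * \<delta> y + \<delta> x * y)"

definition lin_indep_on :: "'a::field set \<Rightarrow> 'b set \<Rightarrow> ('b \<Rightarrow> 'a) \<Rightarrow> bool" where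
  "lin_indep_on K S x \<longleftrightarrow>
     (\<forall>c. (\<forall>i\<in>S. c i \<in> K) \<and> (\<Sum>i\<in>S. c i * x i) = 0 \<longrightarrow> (\<forall>i\<in>S. c i = 0))"

lemma derivation_add: "derivation \<delta> \<Longrightarrow> \<delta> (x + y) = \<delta> x + \<delta> y"
  unfolding derivation_def by blast

lemma derivation_mult: "derivation \<delta> \<Longrightarrow> \<delta> (x * y) = x * \<delta> y + \<delta> x * y"
  unfolding derivation_def by blast

lemma derivation_zero: "derivation \<delta> \<Longrightarrow> \<delta> 0 = 0"
  using derivation_add[of \<delta> 0 0] by simp

lemma derivation_one: "derivation \<delta> \<Longrightarrow> \<delta> 1 = 0"
  using derivation_mult[of \<delta> 1 1] by simp

lemma derivation_sum: "derivation \<delta> \<Longrightarrow> \<delta> (\<Sum>i\<in>S. f i) = (\<Sum>i\<in>S. \<delta> (f i))"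
  by (induction S rule: infinite_finite_induct) (simp_all add: derivation_zero derivation_add)

lemma derivation_power: "derivation \<delta> \<Longrightarrow> \<delta> (x ^ Suc n) = of_nat (Suc n) * x ^ n * \<delta> x"
  by (induction n) (simp_all add: derivation_mult derivation_one algebra_simps)

lemma derivation_power_CHAR:
  fixes x :: "'a::comm_ring_1"
  assumes "derivation \<delta>"
  shows "\<delta> (x ^ CHAR('a)) = 0"
proof (cases "CHAR('a)")
  case 0
  then show ?thesis using assms by (simp add: derivation_one)
next
  case (Suc n)
  then show ?thesis using derivation_power[OF assms, of x n] by (metis of_nat_CHAR mult_zero_left)
qed

lemma derivation_sum_mult_power_CHAR:
  fixes x :: "'b \<Rightarrow> 'a::comm_ring_1"
  assumes "derivation \<delta>"
  shows "\<delta> (\<Sum>i\<in>S. c i * x i ^ CHAR('a)) = (\<Sum>i\<in>S. \<delta> (c i) * x i ^ CHAR('a))"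
  using assms by (simp add: derivation_sum derivation_mult derivation_power_CHAR)

lemma unit_idx_in_trunc_idx:
  assumes "l < e" "1 < p" "m > 0"
  shows "unit_idx l \<in> trunc_idx e p m"
proof -
  have "unit_idx l t < p ^ n" if "m = enat n" for t n
  proof -
    have "n > 0" using assms(3) that by (simp add: enat_0_iff)
    then have "1 < p ^ n" using assms(2) by (intro one_less_power)
    then show ?thesis using assms(2) by (simp add: unit_idx_def)
  qed
  moreover have "unit_idx l t = 0" if "t \<ge> e" for t
    using assms(1) that by (simp add: unit_idx_def)
  ultimately show ?thesis
    unfolding trunc_idx_def by (auto split: enat.split)
qed

lemma le_unit_idx_iff: "j \<le> unit_idx l \<longleftrightarrow> j = (\<lambda>_. 0) \<or> j = unit_idx l"
proof
  assume le: "j \<le> unit_idx l"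
  then have off_l: "j t = 0" if "t \<noteq> l" for t
    using that by (auto simp: le_fun_def unit_idx_def dest: spec[of _ t])
  have "j l = 0 \<or> j l = 1"
    using le by (auto simp: le_fun_def unit_idx_def dest: spec[of _ l])
  then show "j = (\<lambda>_. 0) \<or> j = unit_idx l"
  proof
    assume "j l = 0"
    then have "j t = 0" for t
      using off_l by (cases "t = l") auto
    then show ?thesis by auto
  next
    assume "j l = 1"
    then have "j t = unit_idx l t" for t
      using off_l by (cases "t = l") (auto simp: unit_idx_def)
    then show ?thesis by auto
  qed
qed (auto simp: le_fun_def)

lemma unit_idx_neq_zero: "unit_idx l \<noteq> (\<lambda>_. 0)"
  by (auto simp: unit_idx_def fun_eq_iff)

lemma HS_derivation_unit_idx_mult:
  assumes "HS_derivation k R e p m D" "unit_idx l \<in> trunc_idx e p m" "x \<in> R" "y \<in> R"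
  shows "D (unit_idx l) (x * y) = x * D (unit_idx l) y + D (unit_idx l) x * y"
proof -
  have "{j. j \<le> unit_idx l} = {(\<lambda>_. 0), unit_idx l}"
    by (auto simp: le_unit_idx_iff)
  moreover have "D (unit_idx l) (x * y) =
      (\<Sum>j\<in>{j. j \<le> unit_idx l}. D j x * D (\<lambda>t. unit_idx l t - j t) y)"
    using assms unfolding HS_derivation_def by blast
  ultimately have "D (unit_idx l) (x * y) =
      D (\<lambda>_. 0) x * D (unit_idx l) y + D (unit_idx l) x * D (\<lambda>_. 0) y"
    using unit_idx_neq_zero[of l] by simp
  moreover have "D (\<lambda>_. 0) x = x" "D (\<lambda>_. 0) y = y"
    using assms unfolding HS_derivation_def by blast+
  ultimately show ?thesis
    by simp
qed

lemma derivation_HS_derivation_unit_idx: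
  assumes "HS_derivation k UNIV e p m D" "unit_idx l \<in> trunc_idx e p m"
  shows "derivation (D (unit_idx l))"
  using assms HS_derivation_unit_idx_mult[OF assms]
  unfolding derivation_def HS_derivation_def by blast

lemma lin_indep_onD:
  assumes "lin_indep_on K S x" "\<forall>i\<in>S. c i \<in> K" "(\<Sum>i\<in>S. c i * x i) = 0" "i \<in> S"
  shows "c i = 0"
  using assms unfolding lin_indep_on_def by blast

lemma lin_indep_on_subset:
  assumes "lin_indep_on K S x" "T \<subseteq> S" "finite S" "0 \<in> K"
  shows "lin_indep_on K T x"
  unfolding lin_indep_on_def
proof (intro allI impI ballI)
  fix c i assume c: "(\<forall>i\<in>T. c i \<in> K) \<and> (\<Sum>i\<in>T. c i * x i) = 0" and "i \<in> T"
  define c' where "c' i = (if i \<in> T then c i else 0)" for i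
  have "(\<Sum>i\<in>S. c' i * x i) = (\<Sum>i\<in>T. c' i * x i)"
    using assms(2,3) by (intro sum.mono_neutral_right) (auto simp: c'_def)
  also have "\<dots> = 0"
    using c by (simp add: c'_def)
  finally have relation: "(\<Sum>i\<in>S. c' i * x i) = 0" .
  have coeffs: "\<forall>i\<in>S. c' i \<in> K"
    using assms(4) c by (simp add: c'_def)
  have "c' i = 0"
    using lin_indep_onD[OF assms(1) coeffs relation] assms(2) \<open>i \<in> T\<close> by blast
  then show "c i = 0"
    using \<open>i \<in> T\<close> by (simp add: c'_def)
qed

lemma lin_indep_over_iff_lin_indep_on: "lin_indep_over K n x \<longleftrightarrow> lin_indep_on K {..<n} x"
  by (simp add: lin_indep_over_def lin_indep_on_def Ball_def)

lemma lin_indep_onD_power_CHAR: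
  fixes x :: "'b \<Rightarrow> 'a::field"
  assumes "prime CHAR('a)" "lin_indep_on K S x" "\<forall>i\<in>S. d i \<in> K"
    and "(\<Sum>i\<in>S. d i ^ CHAR('a) * x i ^ CHAR('a)) = 0" "i \<in> S"
  shows "d i = 0"
proof -
  have "(\<Sum>i\<in>S. d i * x i) ^ CHAR('a) = 0"
    using assms(4) by (simp add: freshmans_dream_sum[OF assms(1)] power_mult_distrib)
  then have "(\<Sum>i\<in>S. d i * x i) = 0"
    by simp
  then show ?thesis
    using lin_indep_onD[OF assms(2,3)] assms(5) by blast
qed

lemma derivation_relation_coeff_eq_0:
  fixes x :: "'b \<Rightarrow> 'a::field"
  assumes \<delta>: "derivation \<delta>" "\<delta> ` K \<subseteq> K"
    and "finite S" "j \<in> S" "lin_indep_on K (S - {j}) (\<lambda>i. x i ^ CHAR('a))"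
    and a: "\<forall>i\<in>S. a i \<in> K" "a j = 1" "(\<Sum>i\<in>S. a i * x i ^ CHAR('a)) = 0"
    and "i \<in> S"
  shows "\<delta> (a i) = 0"
proof (cases "i = j")
  case True
  then show ?thesis
    using \<delta> a by (simp add: derivation_one)
next
  case False
  have "(\<Sum>i\<in>S. \<delta> (a i) * x i ^ CHAR('a)) = \<delta> (\<Sum>i\<in>S. a i * x i ^ CHAR('a))"
    by (rule derivation_sum_mult_power_CHAR[OF \<delta>(1), symmetric])
  also have "\<dots> = 0"
    using a derivation_zero[OF \<delta>(1)] by simp
  finally have "(\<Sum>i\<in>S - {j}. \<delta> (a i) * x i ^ CHAR('a)) = 0"
    using assms(3,4) a by (simp add: sum.remove derivation_one[OF \<delta>(1)])
  moreover have "\<forall>i\<in>S - {j}. \<delta> (a i) \<in> K"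
    using \<delta>(2) a by blast
  ultimately show ?thesis
    using lin_indep_onD[OF assms(5), of "\<lambda>i. \<delta> (a i)" i] \<open>i \<in> S\<close> False by blast
qed

lemma lin_indep_on_power_CHAR:
  fixes K :: "'a::field set" and \<Delta> :: "('a \<Rightarrow> 'a) set"
  assumes prime: "prime CHAR('a)" and K: "is_subfield K"
    and \<Delta>: "\<And>\<delta>. \<delta> \<in> \<Delta> \<Longrightarrow> derivation \<delta> \<and> \<delta> ` K \<subseteq> K"
    and constants: "{c \<in> K. \<forall>\<delta>\<in>\<Delta>. \<delta> c = 0} \<subseteq> pth_powers CHAR('a) K"
    and "finite S" "lin_indep_on K S x"
  shows "lin_indep_on K S (\<lambda>i. x i ^ CHAR('a))"
  using assms(5,6)
proof (induction S rule: finite_psubset_induct)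
  case (psubset S)
  let ?p = "CHAR('a)"
  show ?case
    unfolding lin_indep_on_def
  proof (intro allI impI ballI, rule ccontr)
    fix c j assume c: "(\<forall>i\<in>S. c i \<in> K) \<and> (\<Sum>i\<in>S. c i * x i ^ ?p) = 0"
      and "j \<in> S" "c j \<noteq> 0"
    define a where "a i = c i / c j" for i
    have aK: "\<forall>i\<in>S. a i \<in> K"
      using K c \<open>j \<in> S\<close> \<open>c j \<noteq> 0\<close> unfolding a_def divide_inverse is_subfield_def by blast
    have "a j = 1"
      using \<open>c j \<noteq> 0\<close> by (simp add: a_def)
    have rel: "(\<Sum>i\<in>S. a i * x i ^ ?p) = 0"
      using c by (simp add: a_def sum_divide_distrib[symmetric])
    have "lin_indep_on K (S - {j}) x"
      using lin_indep_on_subset[OF psubset.prems, of "S - {j}"] psubset.hyps K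
      by (auto simp: is_subfield_def)
    then have "lin_indep_on K (S - {j}) (\<lambda>i. x i ^ ?p)"
      using psubset.IH[of "S - {j}"] \<open>j \<in> S\<close> by blast
    then have "\<forall>\<delta>\<in>\<Delta>. \<delta> (a i) = 0" if "i \<in> S" for i
      using derivation_relation_coeff_eq_0[of _ K S j x a i] \<Delta> psubset.hyps(1)
        \<open>j \<in> S\<close> aK \<open>a j = 1\<close> rel that by blast
    then have "\<exists>d\<in>K. a i = d ^ ?p" if "i \<in> S" for i
      using constants aK that unfolding pth_powers_def by blast
    then obtain d where d: "\<forall>i\<in>S. d i \<in> K \<and> a i = d i ^ ?p"
      by metis
    then have "d j = 0"
      using lin_indep_onD_power_CHAR[OF prime psubset.prems, of d] rel \<open>j \<in> S\<close> by simp
    then show False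
      using d \<open>j \<in> S\<close> \<open>a j = 1\<close> prime_gt_0_nat[OF prime] by (simp add: power_0_left)
  qed
qed

lemma separable_ext_if_constants_pth_powers:
  fixes K :: "'a::field set" and \<Delta> :: "('a \<Rightarrow> 'a) set"
  assumes "prime CHAR('a)" "is_subfield K"
    and "\<And>\<delta>. \<delta> \<in> \<Delta> \<Longrightarrow> derivation \<delta> \<and> \<delta> ` K \<subseteq> K"
    and "{c \<in> K. \<forall>\<delta>\<in>\<Delta>. \<delta> c = 0} \<subseteq> pth_powers CHAR('a) K"
  shows "separable_ext CHAR('a) K UNIV"
  using lin_indep_on_power_CHAR[OF assms]
  unfolding separable_ext_def lin_indep_over_iff_lin_indep_on by blast

theorem mainTheorem7:
  fixes k K :: "'a::field set"
    and p e :: nat and m :: enat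
    and \<Phi> :: "nat \<Rightarrow> 'a mps"
    and DK DL :: "(nat \<Rightarrow> nat) \<Rightarrow> 'a \<Rightarrow> 'a"
  assumes char: "p > 0" "CHAR('a) = p"
    and k: "is_subfield k"
    and K: "is_subfield K" "k \<subseteq> K"
    and fgl: "formal_group_law k e \<Phi>"
    and m: "m > 0"
    and DK: "F_derivation k K e p m \<Phi> DK"
    and DL: "F_derivation k UNIV e p m \<Phi> DL"
    and ext: "\<forall>i\<in>trunc_idx e p m. \<forall>x\<in>K. DL i x = DK i x"
    and strict: "const_field K e DK = pth_powers p K"
  shows "separable_ext p K UNIV"
proof -
  have prime: "prime p"
    using char prime_CHAR_semidom[where 'a='a] by simp
  have unit: "unit_idx l \<in> trunc_idx e p m" if "l < e" for l
    using unit_idx_in_trunc_idx[OF that prime_gt_1_nat[OF prime] m] .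
  have HS: "HS_derivation k UNIV e p m DL" "HS_derivation k K e p m DK"
    using DL DK unfolding F_derivation_def by auto
  let ?\<Delta> = "(\<lambda>l. DL (unit_idx l)) ` {..<e}"
  have "DL (unit_idx l) ` K \<subseteq> K" if "l < e" for l
  proof -
    have "DK (unit_idx l) ` K \<subseteq> K"
      using HS(2) unit[OF that] unfolding HS_derivation_def by blast
    then show ?thesis
      using ext unit[OF that] by auto
  qed
  then have "derivation \<delta> \<and> \<delta> ` K \<subseteq> K" if "\<delta> \<in> ?\<Delta>" for \<delta>
    using that derivation_HS_derivation_unit_idx[OF HS(1) unit] by blast
  moreover have "{c \<in> K. \<forall>\<delta>\<in>?\<Delta>. \<delta> c = 0} \<subseteq> pth_powers p K"
    using ext unit unfolding strict[symmetric] const_field_def by auto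
  ultimately show ?thesis
    using separable_ext_if_constants_pth_powers[of K ?\<Delta>] prime K(1) char by blast
qed

end
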